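(* Let $t\ge1$ and let $h:\{0,1\}^t\times\{0,1\}^t\to\{0,1\}$ be a Boolean function with $\mathrm{Cov}_0(h)=c$ and $\mathrm{UCov}_1(h)=m$. Then there exists a graph $G$ on at most $2^{2t}$ vertices with $\mathrm{bp}(G)\le m^2$ and $\chi(G)\ge\sqrt{c}$.
   Context: A $b$-monochromatic rectangle for $h$ is a set $A\times B$ with $A,B\subseteq\{0,1\}^t$ on which $h\equiv b$. $\mathrm{Cov}_b(h)$ is the minimum number of $b$-monochromatic rectangles covering $h^{-1}(b)$; $\mathrm{UCov}_b(h)$ is the minimum number of pairwise disjoint $b$-monochromatic rectangles partitioning $h^{-1}(b)$. For a graph $G$, $\chi(G)$ is the chromatic number and $\mathrm{bp}(G)$ is the minimum number of bicliques (complete bipartite subgraphs) whose edge sets partition $E(G)$. *)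

theory Defs
  imports Complex_Main
begin

text \<open>The Boolean cube {0,1}^t, encoded as bool lists of length t (False = 0, True = 1).\<close>
definition cube :: "nat \<Rightarrow> bool list set" where
  "cube t = {xs. length xs = t}"

definition mono_rect :: "(bool list \<Rightarrow> bool list \<Rightarrow> bool) \<Rightarrow> nat \<Rightarrow> bool
    \<Rightarrow> bool list set \<Rightarrow> bool list set \<Rightarrow> bool" where
  "mono_rect h t b A B \<longleftrightarrow> A \<subseteq> cube t \<and> B \<subseteq> cube t \<and> (\<forall>x\<in>A. \<forall>y\<in>B. h x y = b)"

definition preimage_pts :: "(bool list \<Rightarrow> bool list \<Rightarrow> bool) \<Rightarrow> nat \<Rightarrow> bool \<Rightarrow> (bool list \<times> bool list) set" where
  "preimage_pts h t b = {(x, y). x \<in> cube t \<and> y \<in> cube t \<and> h x y = b}"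

definition Cov :: "(bool list \<Rightarrow> bool list \<Rightarrow> bool) \<Rightarrow> nat \<Rightarrow> bool \<Rightarrow> nat" where
  "Cov h t b = (LEAST k. \<exists>R :: nat \<Rightarrow> bool list set \<times> bool list set.
      (\<forall>i<k. mono_rect h t b (fst (R i)) (snd (R i))) \<and>
      preimage_pts h t b \<subseteq> (\<Union>i<k. fst (R i) \<times> snd (R i)))"

definition UCov :: "(bool list \<Rightarrow> bool list \<Rightarrow> bool) \<Rightarrow> nat \<Rightarrow> bool \<Rightarrow> nat" where
  "UCov h t b = (LEAST k. \<exists>R :: nat \<Rightarrow> bool list set \<times> bool list set.
      (\<forall>i<k. mono_rect h t b (fst (R i)) (snd (R i))) \<and>
      (\<forall>i<k. \<forall>j<k. i \<noteq> j \<longrightarrow> (fst (R i) \<times> snd (R i)) \<inter> (fst (R j) \<times> snd (R j)) = {}) \<and>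
      preimage_pts h t b = (\<Union>i<k. fst (R i) \<times> snd (R i)))"

definition simple_graph :: "'v set \<Rightarrow> 'v set set \<Rightarrow> bool" where
  "simple_graph V E \<longleftrightarrow> finite V \<and> (\<forall>e\<in>E. \<exists>x y. x \<noteq> y \<and> x \<in> V \<and> y \<in> V \<and> e = {x, y})"

definition chromatic_number :: "'v set \<Rightarrow> 'v set set \<Rightarrow> nat" where
  "chromatic_number V E = (LEAST k. \<exists>f :: 'v \<Rightarrow> nat.
      (\<forall>v\<in>V. f v < k) \<and> (\<forall>x y. {x, y} \<in> E \<longrightarrow> f x \<noteq> f y))"

definition biclique_edges :: "'v set \<Rightarrow> 'v set \<Rightarrow> 'v set set" where
  "biclique_edges X Y = {{x, y} | x y. x \<in> X \<and> y \<in> Y}"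

definition is_biclique :: "'v set \<Rightarrow> 'v set set \<Rightarrow> 'v set \<Rightarrow> 'v set \<Rightarrow> bool" where
  "is_biclique V E X Y \<longleftrightarrow> X \<subseteq> V \<and> Y \<subseteq> V \<and> X \<inter> Y = {} \<and> biclique_edges X Y \<subseteq> E"

definition bp :: "'v set \<Rightarrow> 'v set set \<Rightarrow> nat" where
  "bp V E = (LEAST k. \<exists>B :: nat \<Rightarrow> 'v set \<times> 'v set.
      (\<forall>i<k. is_biclique V E (fst (B i)) (snd (B i))) \<and>
      (\<forall>i<k. \<forall>j<k. i \<noteq> j \<longrightarrow>
          biclique_edges (fst (B i)) (snd (B i)) \<inter> biclique_edges (fst (B j)) (snd (B j)) = {}) \<and>
      (\<Union>i<k. biclique_edges (fst (B i)) (snd (B i))) = E)"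

end

theory Submission
  imports Defs "HOL-Library.Countable"
begin

text \<open>Let \<open>Z\<close> be the set of zero entries \<open>(x\<^sub>u, y\<^sub>u)\<close> of \<open>h\<close> and say that \<open>u\<close> hits \<open>v\<close> if
  \<open>h x\<^sub>u y\<^sub>v = 1\<close>. The OR graph joins \<open>u, v\<close> if one hits the other, the AND graph if both do.
  A colour class of the OR graph is a 0-monochromatic rectangle, so \<open>\<chi>(OR) \<ge> c\<close>. Colouring the
  AND graph with \<open>q\<close> colours and each colour class of the OR graph separately gives
  \<open>\<chi>(OR) \<le> q \<cdot> max\<^sub>a \<chi>(OR[W\<^sub>a])\<close>, so either \<open>q \<ge> \<surd>c\<close> or some class \<open>W\<^sub>a\<close> has \<open>\<chi>(OR[W\<^sub>a]) \<ge> \<surd>c\<close>.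
  Both graphs have small biclique partitions: the 1-rectangles \<open>A\<^sub>i \<times> B\<^sub>i\<close> give \<open>m\<close> bicliques
  partitioning OR on an AND-independent set, and the pairs \<open>i < j\<close> give \<open>m\<^sup>2\<close> bicliques
  partitioning AND.\<close>

lemma finite_cube: "finite (cube t)"
  and card_cube: "card (cube t) = 2 ^ t"
proof -
  have cube_eq: "cube t = {xs. set xs \<subseteq> (UNIV :: bool set) \<and> length xs = t}"
    unfolding cube_def by blast
  show "finite (cube t)" unfolding cube_eq by (rule finite_lists_length_eq) simp
  show "card (cube t) = 2 ^ t" unfolding cube_eq by (subst card_lists_length_eq) simp_all
qed

lemma preimage_pts_subset: "preimage_pts h t b \<subseteq> cube t \<times> cube t"
  unfolding preimage_pts_def by blast

lemma finite_preimage_pts: "finite (preimage_pts h t b)"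
  using preimage_pts_subset finite_cube by (meson finite_SigmaI rev_finite_subset)

lemma card_preimage_pts_le: "card (preimage_pts h t b) \<le> 2 ^ (2 * t)"
proof -
  have "card (preimage_pts h t b) \<le> card (cube t \<times> cube t)"
    using preimage_pts_subset finite_cube by (intro card_mono) auto
  also have "\<dots> = 2 ^ (2 * t)"
    by (simp add: card_cartesian_product card_cube mult_2 flip: power_add)
  finally show ?thesis .
qed

lemma Cov_le:
  assumes "\<forall>i<k. mono_rect h t b (fst (R i)) (snd (R i))"
    and "preimage_pts h t b \<subseteq> (\<Union>i<k. fst (R i) \<times> snd (R i))"
  shows "Cov h t b \<le> k"
  unfolding Cov_def by (rule Least_le) (use assms in blast)

text \<open>The partition into singleton rectangles shows that the \<open>LEAST\<close> in \<open>UCov\<close> is attained.\<close>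
lemma UCov_attained:
  "\<exists>R :: nat \<Rightarrow> bool list set \<times> bool list set.
      (\<forall>i<UCov h t b. mono_rect h t b (fst (R i)) (snd (R i))) \<and>
      (\<forall>i<UCov h t b. \<forall>j<UCov h t b. i \<noteq> j \<longrightarrow>
          (fst (R i) \<times> snd (R i)) \<inter> (fst (R j) \<times> snd (R j)) = {}) \<and>
      preimage_pts h t b = (\<Union>i<UCov h t b. fst (R i) \<times> snd (R i))"
proof -
  let ?P = "preimage_pts h t b"
  obtain f where f: "bij_betw f {0..<card ?P} ?P"
    using ex_bij_betw_nat_finite[OF finite_preimage_pts] by blast
  define R where "R i = ({fst (f i)}, {snd (f i)})" for i
  have rect: "fst (R i) \<times> snd (R i) = {f i}" for i
    unfolding R_def by (simp add: prod_eq_iff)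
  have "(\<forall>i<card ?P. mono_rect h t b (fst (R i)) (snd (R i))) \<and>
      (\<forall>i<card ?P. \<forall>j<card ?P. i \<noteq> j \<longrightarrow>
          (fst (R i) \<times> snd (R i)) \<inter> (fst (R j) \<times> snd (R j)) = {}) \<and>
      ?P = (\<Union>i<card ?P. fst (R i) \<times> snd (R i))"
  proof (intro conjI allI impI)
    fix i assume "i < card ?P"
    then have "f i \<in> ?P" using f unfolding bij_betw_def by auto
    then show "mono_rect h t b (fst (R i)) (snd (R i))"
      unfolding R_def mono_rect_def preimage_pts_def by auto
  next
    fix i j assume "i < card ?P" "j < card ?P" "i \<noteq> j"
    then have "f i \<noteq> f j" using f unfolding bij_betw_def inj_on_def by auto
    then show "(fst (R i) \<times> snd (R i)) \<inter> (fst (R j) \<times> snd (R j)) = {}"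
      unfolding rect by simp
  next
    have "?P = f ` {..<card ?P}" using f unfolding bij_betw_def atLeast0LessThan by simp
    then show "?P = (\<Union>i<card ?P. fst (R i) \<times> snd (R i))" unfolding rect by blast
  qed
  then have "\<exists>R. (\<forall>i<card ?P. mono_rect h t b (fst (R i)) (snd (R i))) \<and>
      (\<forall>i<card ?P. \<forall>j<card ?P. i \<noteq> j \<longrightarrow>
          (fst (R i) \<times> snd (R i)) \<inter> (fst (R j) \<times> snd (R j)) = {}) \<and>
      ?P = (\<Union>i<card ?P. fst (R i) \<times> snd (R i))" by (rule exI[of _ R])
  then show ?thesis unfolding UCov_def by (rule LeastI)
qed

definition rel_graph :: "'v set \<Rightarrow> ('v \<Rightarrow> 'v \<Rightarrow> bool) \<Rightarrow> 'v set set" where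
  "rel_graph V P = {{a, b} | a b. a \<in> V \<and> b \<in> V \<and> a \<noteq> b \<and> P a b}"

lemma simple_graph_rel_graph: "finite V \<Longrightarrow> simple_graph V (rel_graph V P)"
  unfolding simple_graph_def rel_graph_def by blast

lemma rel_graph_edge_iff:
  "{x, y} \<in> rel_graph V P \<longleftrightarrow> x \<in> V \<and> y \<in> V \<and> x \<noteq> y \<and> (P x y \<or> P y x)"
  unfolding rel_graph_def by (auto simp: doubleton_eq_iff)

lemma rel_graph_cong:
  assumes "\<And>u v. u \<in> V \<Longrightarrow> v \<in> V \<Longrightarrow> u \<noteq> v \<Longrightarrow> P u v \<or> P v u \<longleftrightarrow> Q u v \<or> Q v u"
  shows "rel_graph V P = rel_graph V Q"
proof -
  have edge: "{a, b} \<in> rel_graph V P \<longleftrightarrow> {a, b} \<in> rel_graph V Q" for a b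
    using assms by (auto simp: rel_graph_edge_iff)
  have doubleton: "\<exists>a b. e = {a, b}" if "e \<in> rel_graph V R" for e R
    using that unfolding rel_graph_def by blast
  show ?thesis
  proof (rule set_eqI)
    fix e
    show "e \<in> rel_graph V P \<longleftrightarrow> e \<in> rel_graph V Q"
    proof (cases "\<exists>a b. e = {a, b}")
      case True
      then show ?thesis using edge by blast
    next
      case False
      then show ?thesis using doubleton by blast
    qed
  qed
qed

definition proper_coloring :: "'v set \<Rightarrow> 'v set set \<Rightarrow> nat \<Rightarrow> ('v \<Rightarrow> nat) \<Rightarrow> bool" where
  "proper_coloring V E k f \<longleftrightarrow> (\<forall>v\<in>V. f v < k) \<and> (\<forall>x y. {x, y} \<in> E \<longrightarrow> f x \<noteq> f y)"

lemma chromatic_number_le: "proper_coloring V E k f \<Longrightarrow> chromatic_number V E \<le> k"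
  unfolding chromatic_number_def proper_coloring_def by (rule Least_le) blast

lemma chromatic_number_attained:
  assumes "simple_graph V E"
  obtains f where "proper_coloring V E (chromatic_number V E) f"
proof -
  have "finite V" using assms unfolding simple_graph_def by blast
  obtain f :: "'a \<Rightarrow> nat" and n where f: "f ` V = {i. i < n}" "inj_on f V"
    using finite_imp_inj_to_nat_seg[OF \<open>finite V\<close>] by blast
  have "f x \<noteq> f y" if "{x, y} \<in> E" for x y
  proof -
    obtain a b where "a \<noteq> b" "a \<in> V" "b \<in> V" "{x, y} = {a, b}"
      using assms \<open>{x, y} \<in> E\<close> unfolding simple_graph_def by blast
    then have "x \<noteq> y" "x \<in> V" "y \<in> V" by (auto simp: doubleton_eq_iff)
    then show ?thesis using f(2) by (meson inj_on_def)
  qed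
  then have "proper_coloring V E n f"
    using f(1) unfolding proper_coloring_def by blast
  then have "\<exists>k f. proper_coloring V E k f" by blast
  then have "\<exists>f. proper_coloring V E (chromatic_number V E) f"
    unfolding chromatic_number_def proper_coloring_def by (rule LeastI_ex)
  then show ?thesis using that by blast
qed

text \<open>Product colouring: colour \<open>v\<close> by the pair (its colour within its class, its class).\<close>
lemma chromatic_number_le_classes:
  assumes "finite V" and classes: "\<forall>v\<in>V. g v < q"
    and bound: "\<forall>a<q. chromatic_number {v\<in>V. g v = a} (rel_graph {v\<in>V. g v = a} P) \<le> M"
  shows "chromatic_number V (rel_graph V P) \<le> M * q"
proof -
  define W where "W a = {v\<in>V. g v = a}" for a
  have "\<exists>f. proper_coloring (W a) (rel_graph (W a) P) (chromatic_number (W a) (rel_graph (W a) P)) f"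
    for a
  proof -
    have "finite (W a)" using \<open>finite V\<close> unfolding W_def by simp
    then obtain f where "proper_coloring (W a) (rel_graph (W a) P) (chromatic_number (W a) (rel_graph (W a) P)) f"
      by (rule chromatic_number_attained[OF simple_graph_rel_graph])
    then show ?thesis by blast
  qed
  then obtain F where F: "\<And>a. proper_coloring (W a) (rel_graph (W a) P)
                               (chromatic_number (W a) (rel_graph (W a) P)) (F a)"
    by metis
  define col where "col v = F (g v) v * q + g v" for v
  have col_mod: "col v mod q = g v" and col_div: "col v div q = F (g v) v" if "v \<in> V" for v
  proof -
    have "g v < q" using classes that by blast
    then show "col v mod q = g v" "col v div q = F (g v) v" unfolding col_def by simp_all
  qed
  have "proper_coloring V (rel_graph V P) (M * q) col"
    unfolding proper_coloring_def
  proof (intro conjI allI impI ballI)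
    fix v assume v: "v \<in> V"
    then have "F (g v) v < chromatic_number (W (g v)) (rel_graph (W (g v)) P)"
      using F unfolding proper_coloring_def W_def by blast
    also have "\<dots> \<le> M" using bound classes v unfolding W_def by blast
    finally have "(F (g v) v + 1) * q \<le> M * q" by (intro mult_le_mono1) simp
    moreover have "g v < q" using classes v by blast
    ultimately show "col v < M * q" unfolding col_def by simp
  next
    fix x y assume "{x, y} \<in> rel_graph V P"
    then have xy: "x \<in> V" "y \<in> V" "x \<noteq> y" "P x y \<or> P y x"
      by (simp_all add: rel_graph_edge_iff)
    show "col x \<noteq> col y"
    proof
      assume same: "col x = col y"
      then have "g x = g y" using col_mod xy by metis
      moreover from this have "F (g x) x = F (g x) y" using col_div xy same by metis
      moreover have "{x, y} \<in> rel_graph (W (g x)) P"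
        using xy \<open>g x = g y\<close> by (simp add: rel_graph_edge_iff W_def)
      ultimately show False using F[of "g x"] unfolding proper_coloring_def by blast
    qed
  qed
  then show ?thesis by (rule chromatic_number_le)
qed

lemma sqrt_le_either_factor:
  fixes c M q :: nat
  assumes "c \<le> M * q" and "real q < sqrt (real c)"
  shows "sqrt (real c) \<le> real M"
proof (rule ccontr)
  assume "\<not> sqrt (real c) \<le> real M"
  moreover have "0 < sqrt (real c)" using assms(2) of_nat_0_le_iff[of q] by linarith
  ultimately have "real M * real q < sqrt (real c) * sqrt (real c)"
    using assms(2) by (intro mult_strict_mono) auto
  then show False using assms(1) by (simp flip: of_nat_mult)
qed

lemma exists_class_chromatic_number_ge:
  assumes "finite V" and classes: "\<forall>v\<in>V. g v < q"
    and "c \<le> chromatic_number V (rel_graph V P)" and "real q < sqrt (real c)"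
  shows "\<exists>a<q. sqrt (real c) \<le> real (chromatic_number {v\<in>V. g v = a} (rel_graph {v\<in>V. g v = a} P))"
proof -
  define \<chi> where "\<chi> a = chromatic_number {v\<in>V. g v = a} (rel_graph {v\<in>V. g v = a} P)" for a
  define M where "M = Max (insert 0 (\<chi> ` {..<q}))"
  have "\<forall>a<q. \<chi> a \<le> M" unfolding M_def by simp
  then have "c \<le> M * q"
    using assms(3) chromatic_number_le_classes[OF \<open>finite V\<close> classes] unfolding \<chi>_def
    by (meson le_trans)
  then have M: "sqrt (real c) \<le> real M" using assms(4) by (rule sqrt_le_either_factor)
  then have "M \<noteq> 0" using assms(4) by auto
  moreover have "M \<in> insert 0 (\<chi> ` {..<q})" unfolding M_def by (intro Max_in) auto
  ultimately obtain a where "a < q" "\<chi> a = M" by auto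
  then show ?thesis using M unfolding \<chi>_def by metis
qed

lemma bp_le_card:
  assumes "finite I" and "\<forall>i\<in>I. is_biclique V E (X i) (Y i)"
    and "\<forall>i\<in>I. \<forall>j\<in>I. i \<noteq> j \<longrightarrow> biclique_edges (X i) (Y i) \<inter> biclique_edges (X j) (Y j) = {}"
    and "(\<Union>i\<in>I. biclique_edges (X i) (Y i)) = E"
  shows "bp V E \<le> card I"
proof -
  obtain f where f: "bij_betw f {..<card I} I"
    using ex_bij_betw_nat_finite[OF \<open>finite I\<close>] by (auto simp: atLeast0LessThan)
  define B where "B k = (X (f k), Y (f k))" for k
  have "(\<Union>k<card I. biclique_edges (fst (B k)) (snd (B k))) =
        (\<Union>i\<in>f ` {..<card I}. biclique_edges (X i) (Y i))"
    unfolding B_def by simp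
  also have "\<dots> = E" using assms(4) bij_betw_imp_surj_on[OF f] by simp
  finally have "(\<Union>k<card I. biclique_edges (fst (B k)) (snd (B k))) = E" .
  moreover have "\<forall>k<card I. is_biclique V E (fst (B k)) (snd (B k))"
    using assms(2) f unfolding B_def bij_betw_def by auto
  moreover have "\<forall>k<card I. \<forall>l<card I. k \<noteq> l \<longrightarrow>
      biclique_edges (fst (B k)) (snd (B k)) \<inter> biclique_edges (fst (B l)) (snd (B l)) = {}"
  proof (intro allI impI)
    fix k l assume "k < card I" "l < card I" "k \<noteq> l"
    then have "f k \<in> I" "f l \<in> I" "f k \<noteq> f l"
      using f unfolding bij_betw_def inj_on_def by auto
    then show "biclique_edges (fst (B k)) (snd (B k)) \<inter> biclique_edges (fst (B l)) (snd (B l)) = {}"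
      using assms(3) unfolding B_def by simp
  qed
  ultimately show ?thesis unfolding bp_def by (intro Least_le exI[of _ B]) blast
qed

text \<open>Asymmetry of \<open>D\<close> rules out an edge \<open>{u, v}\<close> being covered once as \<open>(u, v)\<close> and once
  as \<open>(v, u)\<close>.\<close>
lemma bp_rel_graph_le:
  assumes "finite I" and sub: "\<And>i. i \<in> I \<Longrightarrow> X i \<subseteq> V \<and> Y i \<subseteq> V"
    and covers: "\<And>u v. u \<in> V \<Longrightarrow> v \<in> V \<Longrightarrow> D u v \<longleftrightarrow> (\<exists>i\<in>I. u \<in> X i \<and> v \<in> Y i)"
    and unique: "\<And>i j u v. i \<in> I \<Longrightarrow> j \<in> I \<Longrightarrow> u \<in> X i \<Longrightarrow> v \<in> Y i \<Longrightarrow> u \<in> X j \<Longrightarrow> v \<in> Y j \<Longrightarrow> i = j"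
    and asym: "\<And>u v. u \<in> V \<Longrightarrow> v \<in> V \<Longrightarrow> D u v \<Longrightarrow> \<not> D v u"
  shows "bp V (rel_graph V D) \<le> card I"
proof (rule bp_le_card[OF \<open>finite I\<close>])
  have D: "D u v" if "i \<in> I" "u \<in> X i" "v \<in> Y i" for i u v
    using that sub covers by blast
  have XY: "X i \<inter> Y i = {}" if "i \<in> I" for i
    using D[OF that] asym sub[OF that] by blast
  have edge: "{x, y} \<in> rel_graph V D" if "i \<in> I" "x \<in> X i" "y \<in> Y i" for i x y
    using D[OF that] XY[OF that(1)] sub[OF that(1)] that(2,3) by (auto simp: rel_graph_edge_iff)
  show "\<forall>i\<in>I. is_biclique V (rel_graph V D) (X i) (Y i)"
    using sub XY edge unfolding is_biclique_def biclique_edges_def by blast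
  show "\<forall>i\<in>I. \<forall>j\<in>I. i \<noteq> j \<longrightarrow> biclique_edges (X i) (Y i) \<inter> biclique_edges (X j) (Y j) = {}"
  proof (intro ballI impI equals0I)
    fix i j e assume ij: "i \<in> I" "j \<in> I" "i \<noteq> j"
      and "e \<in> biclique_edges (X i) (Y i) \<inter> biclique_edges (X j) (Y j)"
    then obtain x y x' y' where xy: "e = {x, y}" "x \<in> X i" "y \<in> Y i"
      and xy': "e = {x', y'}" "x' \<in> X j" "y' \<in> Y j"
      unfolding biclique_edges_def by blast
    then consider "x = x'" "y = y'" | "x = y'" "y = x'" by (metis doubleton_eq_iff)
    then show False
    proof cases
      case 1
      then show False using unique ij xy xy' by blast
    next
      case 2
      then have "D x y" "D y x" using D ij xy xy' by blast+
      moreover have "x \<in> V" "y \<in> V" using sub ij xy by blast+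
      ultimately show False using asym by blast
    qed
  qed
  show "(\<Union>i\<in>I. biclique_edges (X i) (Y i)) = rel_graph V D"
  proof
    show "(\<Union>i\<in>I. biclique_edges (X i) (Y i)) \<subseteq> rel_graph V D"
      using edge unfolding biclique_edges_def by blast
    show "rel_graph V D \<subseteq> (\<Union>i\<in>I. biclique_edges (X i) (Y i))"
    proof
      fix e assume "e \<in> rel_graph V D"
      then obtain a b where "e = {a, b}" "a \<in> V" "b \<in> V" "D a b"
        unfolding rel_graph_def by blast
      moreover from this obtain i where "i \<in> I" "a \<in> X i" "b \<in> Y i" using covers by blast
      ultimately show "e \<in> (\<Union>i\<in>I. biclique_edges (X i) (Y i))"
        unfolding biclique_edges_def by blast
    qed
  qed
qed

text \<open>Each vertex \<open>u \<in> Z\<close> is labelled by a zero entry \<open>(px u, py u)\<close> of \<open>h\<close> and every zero entry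
  occurs; keeping the vertex type abstract lets the theorem place the vertices in \<open>nat\<close>.\<close>
locale zero_entry_vertices =
  fixes h :: "bool list \<Rightarrow> bool list \<Rightarrow> bool" and t :: nat and Z :: "'v set"
    and px py :: "'v \<Rightarrow> bool list" and A B :: "nat \<Rightarrow> bool list set" and m :: nat
  assumes finite_Z: "finite Z"
    and labels: "(\<lambda>u. (px u, py u)) ` Z = preimage_pts h t False"
    and mono: "\<And>i x y. i < m \<Longrightarrow> x \<in> A i \<Longrightarrow> y \<in> B i \<Longrightarrow> h x y"
    and disj: "\<And>i j x y. i < m \<Longrightarrow> j < m \<Longrightarrow> x \<in> A i \<Longrightarrow> y \<in> B i \<Longrightarrow> x \<in> A j \<Longrightarrow> y \<in> B j \<Longrightarrow> i = j"
    and cov: "\<And>x y. x \<in> cube t \<Longrightarrow> y \<in> cube t \<Longrightarrow> h x y \<Longrightarrow> \<exists>i<m. x \<in> A i \<and> y \<in> B i"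
begin

lemma zero_label: "u \<in> Z \<Longrightarrow> px u \<in> cube t \<and> py u \<in> cube t \<and> \<not> h (px u) (py u)"
  using labels unfolding preimage_pts_def by blast

lemma not_in_same_rectangle: "u \<in> Z \<Longrightarrow> i < m \<Longrightarrow> px u \<in> A i \<Longrightarrow> py u \<in> B i \<Longrightarrow> False"
  using mono zero_label by blast

definition hits :: "'v \<Rightarrow> 'v \<Rightarrow> bool" where
  "hits u v \<longleftrightarrow> h (px u) (py v)"

lemma hits_iff: "u \<in> Z \<Longrightarrow> v \<in> Z \<Longrightarrow> hits u v \<longleftrightarrow> (\<exists>i<m. px u \<in> A i \<and> py v \<in> B i)"
  unfolding hits_def using mono cov zero_label by blast

abbreviation or_graph :: "'v set \<Rightarrow> 'v set set" where
  "or_graph W \<equiv> rel_graph W hits"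

abbreviation and_graph :: "'v set \<Rightarrow> 'v set set" where
  "and_graph W \<equiv> rel_graph W (\<lambda>u v. hits u v \<and> hits v u)"

lemma Cov_le_chromatic_number_or_graph: "Cov h t False \<le> chromatic_number Z (or_graph Z)"
proof -
  let ?k = "chromatic_number Z (or_graph Z)"
  obtain f where f: "proper_coloring Z (or_graph Z) ?k f"
    using finite_Z by (rule chromatic_number_attained[OF simple_graph_rel_graph])
  define R where "R a = (px ` {u\<in>Z. f u = a}, py ` {u\<in>Z. f u = a})" for a
  have no_hit: "\<not> hits u v" if "u \<in> Z" "v \<in> Z" "f u = f v" for u v
  proof (cases "u = v")
    case True
    then show ?thesis using zero_label that unfolding hits_def by blast
  next
    case False
    then have "{u, v} \<notin> or_graph Z" using f that unfolding proper_coloring_def by blast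
    then show ?thesis using that False by (simp add: rel_graph_edge_iff)
  qed
  have "mono_rect h t False (fst (R a)) (snd (R a))" for a
  proof -
    have "h x y = False" if xy: "x \<in> px ` {u\<in>Z. f u = a}" "y \<in> py ` {u\<in>Z. f u = a}" for x y
    proof -
      obtain u v where "u \<in> Z" "v \<in> Z" "f u = a" "f v = a" "x = px u" "y = py v"
        using xy by blast
      then show ?thesis using no_hit[of u v] unfolding hits_def by simp
    qed
    moreover have "px ` {u\<in>Z. f u = a} \<subseteq> cube t" "py ` {u\<in>Z. f u = a} \<subseteq> cube t"
      using zero_label by blast+
    ultimately show ?thesis unfolding mono_rect_def R_def by simp
  qed
  moreover have "preimage_pts h t False \<subseteq> (\<Union>a<?k. fst (R a) \<times> snd (R a))"
  proof
    fix p assume "p \<in> preimage_pts h t False"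
    then obtain u where u: "u \<in> Z" "p = (px u, py u)" unfolding labels[symmetric] by blast
    then have "f u < ?k" using f unfolding proper_coloring_def by blast
    moreover have "p \<in> fst (R (f u)) \<times> snd (R (f u))" unfolding R_def using u by auto
    ultimately show "p \<in> (\<Union>a<?k. fst (R a) \<times> snd (R a))" by blast
  qed
  ultimately show ?thesis by (intro Cov_le[where R = R]) blast+
qed

lemma bp_or_graph_le:
  assumes "W \<subseteq> Z" and independent: "\<And>u v. u \<in> W \<Longrightarrow> v \<in> W \<Longrightarrow> u \<noteq> v \<Longrightarrow> \<not> (hits u v \<and> hits v u)"
  shows "bp W (or_graph W) \<le> m"
proof -
  have "bp W (or_graph W) \<le> card {..<m}"
  proof (rule bp_rel_graph_le[where X = "\<lambda>i. {u\<in>W. px u \<in> A i}" and Y = "\<lambda>i. {v\<in>W. py v \<in> B i}"])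
    show "hits u v \<longleftrightarrow> (\<exists>i\<in>{..<m}. u \<in> {u\<in>W. px u \<in> A i} \<and> v \<in> {v\<in>W. py v \<in> B i})"
      if "u \<in> W" "v \<in> W" for u v
      using that \<open>W \<subseteq> Z\<close> hits_iff by blast
    show "\<not> hits v u" if "u \<in> W" "v \<in> W" "hits u v" for u v
      using that independent zero_label \<open>W \<subseteq> Z\<close> unfolding hits_def by blast
    show "i = j" if "i \<in> {..<m}" "j \<in> {..<m}" "u \<in> {u\<in>W. px u \<in> A i}" "v \<in> {v\<in>W. py v \<in> B i}"
      "u \<in> {u\<in>W. px u \<in> A j}" "v \<in> {v\<in>W. py v \<in> B j}" for i j u v
      using that disj by blast
  qed auto
  then show ?thesis by simp
qed

text \<open>Each edge of the AND graph is oriented so that \<open>(x\<^sub>u, y\<^sub>v)\<close> lies in a lower-indexed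
  rectangle than \<open>(x\<^sub>v, y\<^sub>u)\<close>; the two indices differ because \<open>(x\<^sub>u, y\<^sub>u)\<close> is a zero entry.\<close>
definition hits_lower :: "'v \<Rightarrow> 'v \<Rightarrow> bool" where
  "hits_lower u v \<longleftrightarrow> (\<exists>i j. i < j \<and> j < m \<and> px u \<in> A i \<and> py v \<in> B i \<and> px v \<in> A j \<and> py u \<in> B j)"

lemma hits_lower_imp_hits: "hits_lower u v \<Longrightarrow> hits u v \<and> hits v u"
  unfolding hits_lower_def hits_def using mono by (meson order.strict_trans)

lemma hits_lower_asym: "hits_lower u v \<Longrightarrow> \<not> hits_lower v u"
proof
  assume "hits_lower u v" "hits_lower v u"
  then obtain i j i' j' where "i < j" "j < m" "px u \<in> A i" "py v \<in> B i" "px v \<in> A j" "py u \<in> B j"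
    and "i' < j'" "j' < m" "px v \<in> A i'" "py u \<in> B i'" "px u \<in> A j'" "py v \<in> B j'"
    unfolding hits_lower_def by blast
  moreover from this have "i = j'" "j = i'" using disj by (meson order.strict_trans)+
  ultimately show False by simp
qed

lemma and_graph_eq_hits_lower: "and_graph Z = rel_graph Z hits_lower"
proof (rule rel_graph_cong)
  fix u v assume uv: "u \<in> Z" "v \<in> Z"
  show "(hits u v \<and> hits v u) \<or> (hits v u \<and> hits u v) \<longleftrightarrow> hits_lower u v \<or> hits_lower v u"
  proof
    assume "(hits u v \<and> hits v u) \<or> (hits v u \<and> hits u v)"
    then obtain i j where "i < m" "px u \<in> A i" "py v \<in> B i" "j < m" "px v \<in> A j" "py u \<in> B j"
      using hits_iff uv by meson
    moreover from this have "i \<noteq> j" using not_in_same_rectangle[OF uv(1)] by blast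
    ultimately show "hits_lower u v \<or> hits_lower v u"
      unfolding hits_lower_def by (metis linorder_neqE_nat)
  qed (use hits_lower_imp_hits in blast)
qed

lemma bp_and_graph_le: "bp Z (and_graph Z) \<le> m ^ 2"
proof -
  define I where "I = {(i, j). i < j \<and> j < m}"
  define X where "X = (\<lambda>(i, j). {u\<in>Z. px u \<in> A i \<and> py u \<in> B j})"
  define Y where "Y = (\<lambda>(i, j). {v\<in>Z. px v \<in> A j \<and> py v \<in> B i})"
  have I_sub: "I \<subseteq> {..<m} \<times> {..<m}" unfolding I_def by auto
  then have "card I \<le> m ^ 2"
    by (metis card_cartesian_product card_lessThan card_mono finite_SigmaI finite_lessThan power2_eq_square)
  moreover have "bp Z (rel_graph Z hits_lower) \<le> card I"
  proof (rule bp_rel_graph_le)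
    show "finite I" using I_sub by (rule finite_subset) simp
    show "X p \<subseteq> Z \<and> Y p \<subseteq> Z" for p unfolding X_def Y_def by (auto split: prod.splits)
    show "hits_lower u v \<longleftrightarrow> (\<exists>p\<in>I. u \<in> X p \<and> v \<in> Y p)" if "u \<in> Z" "v \<in> Z" for u v
      using that unfolding hits_lower_def I_def X_def Y_def by (simp add: Bex_def) blast
    show "p = p'" if p: "p \<in> I" "p' \<in> I" and uv: "u \<in> X p" "v \<in> Y p" "u \<in> X p'" "v \<in> Y p'"
      for p p' u v
    proof -
      obtain i j i' j' where ij: "p = (i, j)" "p' = (i', j')" "i < m" "j < m" "i' < m" "j' < m"
        using p I_sub by blast
      then have "px u \<in> A i" "py v \<in> B i" "px v \<in> A j" "py u \<in> B j"
        "px u \<in> A i'" "py v \<in> B i'" "px v \<in> A j'" "py u \<in> B j'"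
        using uv unfolding X_def Y_def by simp_all
      with ij disj show ?thesis by metis
    qed
    show "\<not> hits_lower v u" if "hits_lower u v" for u v
      using that by (rule hits_lower_asym)
  qed
  ultimately show ?thesis unfolding and_graph_eq_hits_lower by linarith
qed

theorem exists_graph_small_bp_large_chromatic_number:
  "\<exists>W E. W \<subseteq> Z \<and> simple_graph W E \<and> bp W E \<le> m ^ 2 \<and>
         sqrt (real (Cov h t False)) \<le> real (chromatic_number W E)"
proof -
  let ?c = "Cov h t False"
  define q where "q = chromatic_number Z (and_graph Z)"
  obtain g where g: "proper_coloring Z (and_graph Z) q g"
    unfolding q_def using finite_Z by (rule chromatic_number_attained[OF simple_graph_rel_graph])
  show ?thesis
  proof (cases "sqrt (real ?c) \<le> real q")
    case True
    then show ?thesis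
      using simple_graph_rel_graph[OF finite_Z] bp_and_graph_le unfolding q_def by blast
  next
    case False
    have "\<forall>u\<in>Z. g u < q" using g unfolding proper_coloring_def by blast
    then obtain a where large: "sqrt (real ?c) \<le> real (chromatic_number {u\<in>Z. g u = a} (or_graph {u\<in>Z. g u = a}))"
      using exists_class_chromatic_number_ge[OF finite_Z _ Cov_le_chromatic_number_or_graph] False
      by (meson not_le)
    let ?W = "{u\<in>Z. g u = a}"
    have "\<not> (hits u v \<and> hits v u)" if "u \<in> ?W" "v \<in> ?W" "u \<noteq> v" for u v
    proof
      assume "hits u v \<and> hits v u"
      then have "{u, v} \<in> and_graph Z" using that by (simp add: rel_graph_edge_iff)
      then have "g u \<noteq> g v" using g unfolding proper_coloring_def by blast
      then show False using that by simp
    qed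
    then have "bp ?W (or_graph ?W) \<le> m" by (intro bp_or_graph_le) auto
    also have "m \<le> m ^ 2" by (simp add: power2_eq_square le_square)
    finally have "bp ?W (or_graph ?W) \<le> m ^ 2" .
    moreover have "simple_graph ?W (or_graph ?W)" using finite_Z by (simp add: simple_graph_rel_graph)
    ultimately show ?thesis using large by (intro exI[of _ ?W] exI[of _ "or_graph ?W"]) auto
  qed
qed

end

theorem lemma3p5:
  fixes h :: "bool list \<Rightarrow> bool list \<Rightarrow> bool" and t c m :: nat
  assumes "t \<ge> 1"
    and "Cov h t False = c"
    and "UCov h t True = m"
  shows "\<exists>(V :: nat set) (E :: nat set set). simple_graph V E \<and> card V \<le> 2 ^ (2 * t) \<and>
           bp V E \<le> m ^ 2 \<and> real (chromatic_number V E) \<ge> sqrt (real c)"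
proof -
  obtain R where R: "\<forall>i<m. mono_rect h t True (fst (R i)) (snd (R i))"
    "\<forall>i<m. \<forall>j<m. i \<noteq> j \<longrightarrow> (fst (R i) \<times> snd (R i)) \<inter> (fst (R j) \<times> snd (R j)) = {}"
    "preimage_pts h t True = (\<Union>i<m. fst (R i) \<times> snd (R i))"
    using UCov_attained[of h t True] unfolding assms(3) by blast
  define Z :: "nat set" where "Z = to_nat ` preimage_pts h t False"
  interpret zero_entry_vertices h t Z "\<lambda>u. fst (from_nat u :: bool list \<times> bool list)"
    "\<lambda>u. snd (from_nat u :: bool list \<times> bool list)"
    "\<lambda>i. fst (R i)" "\<lambda>i. snd (R i)" m
  proof
    show "finite Z" unfolding Z_def using finite_preimage_pts by blast
    show "(\<lambda>u. (fst (from_nat u :: bool list \<times> bool list), snd (from_nat u :: bool list \<times> bool list))) ` Z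
          = preimage_pts h t False"
      unfolding Z_def by (simp add: image_image)
    show "h x y" if "i < m" "x \<in> fst (R i)" "y \<in> snd (R i)" for i x y
      using R(1) that unfolding mono_rect_def by blast
    show "i = j" if "i < m" "j < m" "x \<in> fst (R i)" "y \<in> snd (R i)" "x \<in> fst (R j)" "y \<in> snd (R j)"
      for i j x y
      using R(2) that by blast
    show "\<exists>i<m. x \<in> fst (R i) \<and> y \<in> snd (R i)" if "x \<in> cube t" "y \<in> cube t" "h x y" for x y
      using R(3) that unfolding preimage_pts_def by blast
  qed
  obtain W E where "W \<subseteq> Z" "simple_graph W E" "bp W E \<le> m ^ 2" "sqrt (real c) \<le> real (chromatic_number W E)"
    using exists_graph_small_bp_large_chromatic_number assms(2) by blast
  moreover have "card W \<le> 2 ^ (2 * t)"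
    using card_mono[OF finite_Z \<open>W \<subseteq> Z\<close>] card_image_le[OF finite_preimage_pts, of to_nat h t False]
      card_preimage_pts_le[of h t False] unfolding Z_def by linarith
  ultimately show ?thesis by blast
qed

end
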